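(* Let $P=P(M_\bullet)\in\mathcal{MV}^\sigma$ and $\hat P=\Phi(P)=\hat P(\hat M_\bullet)$. Then for every $i\in\hat I$, $$c_i(\hat P)=c_i(P),$$ where $c_i(\hat P)=\hat M_{\hat\varpi_i}-\hat M_{\hat s_i\hat\varpi_i}-1$ and $c_i(P)=M_{\varpi_i}-M_{s_i\varpi_i}-1$.
   Context: Setting. $\mathfrak{g}$ is a simply-laced simple Lie algebra of type $A_{2l-1}$ ($l\ge2$), $D_{l+1}$ ($l\ge3$), $D_4$ or $E_6$. $\sigma$ is a nontrivial Dynkin diagram automorphism, i.e. a permutation of $I$ with $c_{\sigma(i)\sigma(j)}=c_{ij}$: - for $A_{2l-1}$: the flip $i\leftrightarrow 2l-i$; - for $D_{l+1}$: the swap of the two short-branch end nodes; - for $D_4$: the order-3 rotation of the three outer nodes; - for $E_6$: the flip. The fixed subalgebra $\hat{\mathfrak g}=\mathfrak g^\sigma$ is simple of type $C_l$, $B_l$, $G_2$, $F_4$ respectively. Its index set $\hat I$ is identified with a set of representatives of the $\sigma$-orbits in $I$. Its Weyl group is $\hat W$, with simple reflections $\hat s_i$, fundamental weights $\hat\varpi_i$, chamber weights $\hat\Gamma=\{\hat w\hat\varpi_i\}$, and coroots $\hat h_i=\sum_t h_{\sigma^t(i)}$. There is an isomorphism $\Theta:\hat W\to W^\sigma$ with $\Theta(\hat s_i)=\prod_{t=0}^{k_i-1}s_{\sigma^t(i)}$, where $k_i$ is the size of the orbit of $i$. MV polytopes. For each Lie algebra, MV polytopes $P(M_\bullet)$ are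 pseudo-Weyl polytopes $\{h:\langle h,\gamma\rangle\ge M_\gamma\ \forall\gamma\}$ whose integer data $M_\bullet$, indexed by chamber weights, satisfy Kamnitzer's edge inequalities and tropical Plücker relations. The GGMS datum $(\mu_w)$ is defined by $\langle\mu_w,w\varpi_i\rangle=M_{w\varpi_i}$. $\mathcal{MV}^\sigma$ is the set of MV polytopes for $\mathfrak g$ with $M_\gamma=M_{\sigma(\gamma)}$ for all $\gamma$. $\Phi:\mathcal{MV}^\sigma\to\hat{\mathcal{MV}}$ sends $P$ with GGMS datum $\mu_\bullet$ to the MV polytope $\hat P$ for $\hat{\mathfrak g}$ with GGMS datum $\hat\mu_{\hat w}=\mu_{\Theta(\hat w)}$. $\hat M_\bullet$ denotes the BZ datum of $\hat P$. *)

theory Defs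
  imports Complex_Main
begin

text \<open>FA l: type A_(2l-1), nodes 1..2l-1, sigma i = 2l-i.
  FD l: type D_(l+1), nodes 1..l+1 (chain 1-...-l, plus edge (l-1)-(l+1)),
        sigma swaps the end nodes l and l+1.
  FD4: type D_4, centre 2, outer nodes 1,3,4, sigma = (1 3 4) of order 3.
  FE6: type E_6 (Bourbaki labelling: chain 1-3-4-5-6, node 2 attached to 4),
        sigma = (1 6)(3 5).\<close>

datatype ftype = FA nat | FD nat | FD4 | FE6

fun valid_type :: "ftype \<Rightarrow> bool" where
  "valid_type (FA l) = (l \<ge> 2)"
| "valid_type (FD l) = (l \<ge> 3)"
| "valid_type FD4 = True"
| "valid_type FE6 = True"

fun rank :: "ftype \<Rightarrow> nat" where
  "rank (FA l) = 2 * l - 1"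
| "rank (FD l) = l + 1"
| "rank FD4 = 4"
| "rank FE6 = 6"

definition nodes :: "ftype \<Rightarrow> nat set" where
  "nodes t = {1..rank t}"

fun adj :: "ftype \<Rightarrow> nat \<Rightarrow> nat \<Rightarrow> bool" where
  "adj (FA l) i j = (i + 1 = j \<or> j + 1 = i)"
| "adj (FD l) i j = (((i + 1 = j \<or> j + 1 = i) \<and> i \<le> l \<and> j \<le> l)
                     \<or> (i = l - 1 \<and> j = l + 1) \<or> (j = l - 1 \<and> i = l + 1))"
| "adj FD4 i j = ((i = 2 \<and> j \<in> {1,3,4}) \<or> (j = 2 \<and> i \<in> {1,3,4}))"
| "adj FE6 i j = ({i,j} \<in> {{1,3},{3,4},{4,5},{5,6},{2,4}})"

definition cartan :: "ftype \<Rightarrow> nat \<Rightarrow> nat \<Rightarrow> int" where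
  "cartan t i j = (if i \<in> nodes t \<and> j \<in> nodes t then
                     (if i = j then 2 else if adj t i j then -1 else 0) else 0)"

fun sigma :: "ftype \<Rightarrow> nat \<Rightarrow> nat" where
  "sigma (FA l) i = (if 1 \<le> i \<and> i \<le> 2 * l - 1 then 2 * l - i else i)"
| "sigma (FD l) i = (if i = l then l + 1 else if i = l + 1 then l else i)"
| "sigma FD4 i = (if i = 1 then 3 else if i = 3 then 4 else if i = 4 then 1 else i)"
| "sigma FE6 i = (if i = 1 then 6 else if i = 6 then 1 else
                   if i = 3 then 5 else if i = 5 then 3 else i)"

text \<open>Chosen representatives of the sigma-orbits: the index set hat I.\<close>
fun reps :: "ftype \<Rightarrow> nat set" where
  "reps (FA l) = {1..l}"
| "reps (FD l) = {1..l}"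
| "reps FD4 = {1,2}"
| "reps FE6 = {1,2,3,4}"

text \<open>Weights are written in the basis of fundamental weights: lambda = sum_j lambda(j) varpi_j.
  Coweights h (elements of the real Cartan) in the basis of simple coroots h_j,
  so that the pairing is <h, lambda> = sum_j h(j) lambda(j).\<close>

type_synonym wt = "nat \<Rightarrow> int"

definition fw :: "nat \<Rightarrow> wt" where
  "fw i = (\<lambda>j. if j = i then 1 else 0)"

text \<open>Simple reflection: s_i lambda = lambda - <h_i,lambda> alpha_i, with alpha_i = sum_j c_ji varpi_j.\<close>
definition sref :: "ftype \<Rightarrow> nat \<Rightarrow> wt \<Rightarrow> wt" where
  "sref t i lam = (\<lambda>j. lam j - lam i * cartan t j i)"

text \<open>Weyl group elements are given by words [i1,...,ik] (= s_i1 ... s_ik).\<close>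
definition act :: "ftype \<Rightarrow> nat list \<Rightarrow> wt \<Rightarrow> wt" where
  "act t ws = foldr (\<lambda>i f. sref t i \<circ> f) ws id"

definition chamber :: "ftype \<Rightarrow> wt set" where
  "chamber t = {act t ws (fw i) | ws i. set ws \<subseteq> nodes t \<and> i \<in> nodes t}"

definition wlen :: "ftype \<Rightarrow> nat list \<Rightarrow> nat" where
  "wlen t ws = (LEAST k. \<exists>vs. set vs \<subseteq> nodes t \<and> length vs = k \<and> act t vs = act t ws)"

definition sig_wt :: "ftype \<Rightarrow> wt \<Rightarrow> wt" where
  "sig_wt t lam = (\<lambda>k. \<Sum>j\<in>{j \<in> nodes t. sigma t j = k}. lam j)"

section \<open>MV polytopes via BZ data (Kamnitzer)\<close>

definition edge_ineqs :: "ftype \<Rightarrow> (wt \<Rightarrow> int) \<Rightarrow> bool" where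
  "edge_ineqs t M \<longleftrightarrow> (\<forall>ws i. set ws \<subseteq> nodes t \<and> i \<in> nodes t \<longrightarrow>
      M (act t ws (fw i)) + M (act t (ws @ [i]) (fw i))
      + (\<Sum>j\<in>nodes t - {i}. cartan t j i * M (act t ws (fw j))) \<le> 0)"

definition tropical_pluecker :: "ftype \<Rightarrow> (wt \<Rightarrow> int) \<Rightarrow> bool" where
  "tropical_pluecker t M \<longleftrightarrow> (\<forall>ws i j. set ws \<subseteq> nodes t \<and> i \<in> nodes t \<and> j \<in> nodes t \<and> i \<noteq> j
      \<and> wlen t (ws @ [i]) > wlen t ws \<and> wlen t (ws @ [j]) > wlen t ws \<and> cartan t i j = -1 \<longrightarrow>
      M (act t (ws @ [i]) (fw i)) + M (act t (ws @ [j]) (fw j)) =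
      min (M (act t ws (fw i)) + M (act t (ws @ [i, j]) (fw j)))
          (M (act t ws (fw j)) + M (act t (ws @ [j, i]) (fw i))))"

text \<open>M (restricted to the chamber weights) is the BZ datum of an MV polytope P(M).\<close>
definition is_MV :: "ftype \<Rightarrow> (wt \<Rightarrow> int) \<Rightarrow> bool" where
  "is_MV t M \<longleftrightarrow> edge_ineqs t M \<and> tropical_pluecker t M"

definition is_MV_sigma :: "ftype \<Rightarrow> (wt \<Rightarrow> int) \<Rightarrow> bool" where
  "is_MV_sigma t M \<longleftrightarrow> is_MV t M \<and> (\<forall>\<gamma>\<in>chamber t. M \<gamma> = M (sig_wt t \<gamma>))"

definition pair :: "ftype \<Rightarrow> (nat \<Rightarrow> real) \<Rightarrow> wt \<Rightarrow> real" where
  "pair t h lam = (\<Sum>j\<in>nodes t. h j * of_int (lam j))"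

definition ggms :: "ftype \<Rightarrow> (wt \<Rightarrow> int) \<Rightarrow> nat list \<Rightarrow> (nat \<Rightarrow> real)" where
  "ggms t M ws = (THE h. (\<forall>j. j \<notin> nodes t \<longrightarrow> h j = 0) \<and>
       (\<forall>i\<in>nodes t. pair t h (act t ws (fw i)) = of_int (M (act t ws (fw i)))))"

definition cP :: "ftype \<Rightarrow> (wt \<Rightarrow> int) \<Rightarrow> nat \<Rightarrow> int" where
  "cP t M i = M (fw i) - M (act t [i] (fw i)) - 1"

definition orb :: "ftype \<Rightarrow> nat \<Rightarrow> nat" where
  "orb t i = (LEAST k. k > 0 \<and> (sigma t ^^ k) i = i)"

text \<open>Cartan matrix of the fixed subalgebra: <hat h_j, hat alpha_i>, where
  hat h_j = sum_t h_(sigma^t j) and hat alpha_i = alpha_i restricted to h^sigma.\<close>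
definition hcartan :: "ftype \<Rightarrow> nat \<Rightarrow> nat \<Rightarrow> int" where
  "hcartan t j i = (if j \<in> reps t \<and> i \<in> reps t then
                      (\<Sum>s<orb t j. cartan t ((sigma t ^^ s) j) i) else 0)"

text \<open>Weights of hat g in the basis of the hat varpi_i (i in reps), same encoding.\<close>
definition hsref :: "ftype \<Rightarrow> nat \<Rightarrow> wt \<Rightarrow> wt" where
  "hsref t i lam = (\<lambda>j. lam j - lam i * hcartan t j i)"

definition hact :: "ftype \<Rightarrow> nat list \<Rightarrow> wt \<Rightarrow> wt" where
  "hact t ws = foldr (\<lambda>i f. hsref t i \<circ> f) ws id"

text \<open>Theta(hat s_i) = prod_(t < k_i) s_(sigma^t i), extended to words.\<close>
definition Theta :: "ftype \<Rightarrow> nat list \<Rightarrow> nat list" where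
  "Theta t ws = concat (map (\<lambda>i. map (\<lambda>s. (sigma t ^^ s) i) [0..<orb t i]) ws)"

text \<open>Pairing of h in h^sigma (coroot coordinates, sigma-invariant) with a weight of hat g:
  h = sum_(j in hat I) h(j) hat h_j.\<close>
definition hpair :: "ftype \<Rightarrow> (nat \<Rightarrow> real) \<Rightarrow> wt \<Rightarrow> real" where
  "hpair t h lam = (\<Sum>j\<in>reps t. h j * of_int (lam j))"

text \<open>GGMS datum of hat P = Phi(P): hat mu_(hat w) = mu_(Theta(hat w)).\<close>
definition hggms :: "ftype \<Rightarrow> (wt \<Rightarrow> int) \<Rightarrow> nat list \<Rightarrow> (nat \<Rightarrow> real)" where
  "hggms t M ws = ggms t M (Theta t ws)"

text \<open>BZ datum of hat P: hat M_(hat w hat varpi_i) = <hat mu_(hat w), hat w hat varpi_i>.\<close>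
definition hatBZ :: "ftype \<Rightarrow> (wt \<Rightarrow> int) \<Rightarrow> nat list \<Rightarrow> nat \<Rightarrow> real" where
  "hatBZ t M ws i = hpair t (hggms t M ws) (hact t ws (fw i))"

definition cPhat :: "ftype \<Rightarrow> (wt \<Rightarrow> int) \<Rightarrow> nat \<Rightarrow> real" where
  "cPhat t M i = hatBZ t M [] i - hatBZ t M [i] i - 1"

end

theory Submission
  imports Defs
begin

text \<open>
  For i in hat I, Theta(hat s_i) is a product of pairwise orthogonal simple reflections s_m,
  m in the sigma-orbit of i. For such a word the GGMS datum mu of P is explicit: its coordinate
  is M_(varpi_m) off the word and is read off from M_(s_m varpi_m) on it. Sigma-invariance of M
  makes mu sigma-invariant, so pairing mu with hat s_i hat varpi_i = hat varpi_i - hat alpha_i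
  (a sum over orbits) is the same as pairing it with s_i varpi_i, which gives M_(s_i varpi_i).
  The identity component hat M_(hat varpi_i) = M_(varpi_i) is immediate.
\<close>

lemma finite_nodes [simp]: "finite (nodes t)"
  by (simp add: nodes_def)

lemma cartan_outside: "j \<notin> nodes t \<Longrightarrow> cartan t j i = 0"
  by (simp add: cartan_def)

lemma cartan_diag: "k \<in> nodes t \<Longrightarrow> cartan t k k = 2"
  by (simp add: cartan_def)

lemma act_Nil [simp]: "act t [] = id"
  by (simp add: act_def)

lemma act_Cons [simp]: "act t (m # ws) = sref t m \<circ> act t ws"
  by (simp add: act_def)

lemma sref_eq_self: "lam m = 0 \<Longrightarrow> sref t m lam = lam"
  by (simp add: sref_def)

subsection \<open>Words of pairwise orthogonal reflections\<close>

definition orthogonal_word :: "ftype \<Rightarrow> nat list \<Rightarrow> bool" where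
  "orthogonal_word t ws \<longleftrightarrow> distinct ws \<and> set ws \<subseteq> nodes t \<and>
     (\<forall>a\<in>set ws. \<forall>b\<in>set ws. a \<noteq> b \<longrightarrow> cartan t a b = 0)"

lemma orthogonal_word_Nil: "orthogonal_word t []"
  by (simp add: orthogonal_word_def)

lemma act_orthogonal_word_fw:
  assumes "orthogonal_word t ws"
  shows "act t ws (fw k) = (if k \<in> set ws then sref t k (fw k) else fw k)"
  using assms unfolding orthogonal_word_def
proof (induction ws)
  case Nil
  then show ?case by simp
next
  case (Cons m ws)
  then have IH: "act t ws (fw k) = (if k \<in> set ws then sref t k (fw k) else fw k)"
    by simp
  show ?case
  proof (cases "k = m")
    case True
    with Cons.prems IH show ?thesis by simp
  next
    case False
    have "cartan t m k = 0" if "k \<in> set ws"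
      using Cons.prems that False by auto
    then have "act t ws (fw k) m = 0"
      using False unfolding IH by (simp add: sref_def fw_def)
    then show ?thesis
      using False IH by (simp add: sref_eq_self)
  qed
qed

lemma pair_fw: "k \<in> nodes t \<Longrightarrow> pair t h (fw k) = h k"
  by (simp add: pair_def fw_def if_distrib cong: if_cong)

lemma pair_sref_fw:
  assumes "k \<in> nodes t"
  shows "pair t h (sref t k (fw k)) = h k - (\<Sum>j\<in>nodes t. h j * cartan t j k)"
proof -
  have "pair t h (sref t k (fw k))
      = pair t h (fw k) - (\<Sum>j\<in>nodes t. h j * cartan t j k)"
    unfolding pair_def sref_def by (simp add: fw_def algebra_simps sum_subtractf)
  with pair_fw[OF assms] show ?thesis by simp
qed

lemma pair_sref_fw_off_diagonal:
  assumes k: "k \<in> nodes t"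
  shows "pair t h (sref t k (fw k)) = - h k - (\<Sum>j\<in>nodes t - {k}. h j * cartan t j k)"
  using pair_sref_fw[OF k, of h] sum.remove[OF finite_nodes k, of "\<lambda>j. h j * cartan t j k"]
  by (simp add: cartan_diag[OF k])

text \<open>
  On the word, h m solves pair t h (s_m varpi_m) = M (s_m varpi_m); by orthogonality the other
  coordinates occurring in that equation lie off the word, where h j = M (varpi_j).
\<close>
definition orthogonal_ggms :: "ftype \<Rightarrow> (wt \<Rightarrow> int) \<Rightarrow> nat list \<Rightarrow> nat \<Rightarrow> real" where
  "orthogonal_ggms t M ws m =
     (if m \<notin> nodes t then 0
      else if m \<in> set ws then
        of_int (- M (sref t m (fw m)) - (\<Sum>j\<in>nodes t - {m}. cartan t j m * M (fw j)))
      else of_int (M (fw m)))"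

lemma sum_cartan_off_orthogonal_word:
  fixes h :: "nat \<Rightarrow> real"
  assumes ws: "orthogonal_word t ws" and k: "k \<in> set ws"
    and off: "\<And>j. j \<in> nodes t \<Longrightarrow> j \<notin> set ws \<Longrightarrow> h j = of_int (M (fw j))"
  shows "(\<Sum>j\<in>nodes t - {k}. h j * cartan t j k)
       = of_int (\<Sum>j\<in>nodes t - {k}. cartan t j k * M (fw j))"
  unfolding of_int_sum
proof (rule sum.cong [OF refl])
  fix j
  assume j: "j \<in> nodes t - {k}"
  show "h j * cartan t j k = of_int (cartan t j k * M (fw j))"
  proof (cases "j \<in> set ws")
    case True
    with ws k j have "cartan t j k = 0" by (auto simp: orthogonal_word_def)
    then show ?thesis by simp
  next
    case False
    with off j show ?thesis by simp
  qed
qed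

lemma pair_act_orthogonal_ggms:
  assumes ws: "orthogonal_word t ws" and k: "k \<in> nodes t"
  shows "pair t (orthogonal_ggms t M ws) (act t ws (fw k)) = of_int (M (act t ws (fw k)))"
proof (cases "k \<in> set ws")
  case True
  have "(\<Sum>j\<in>nodes t - {k}. orthogonal_ggms t M ws j * cartan t j k)
      = of_int (\<Sum>j\<in>nodes t - {k}. cartan t j k * M (fw j))"
    by (rule sum_cartan_off_orthogonal_word[OF ws True]) (simp add: orthogonal_ggms_def)
  then show ?thesis
    using k True by (simp add: act_orthogonal_word_fw[OF ws] pair_sref_fw_off_diagonal orthogonal_ggms_def)
next
  case False
  with k show ?thesis
    by (simp add: act_orthogonal_word_fw[OF ws] pair_fw orthogonal_ggms_def)
qed

lemma eq_orthogonal_ggms_if_solution: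
  assumes ws: "orthogonal_word t ws"
    and supp: "\<And>j. j \<notin> nodes t \<Longrightarrow> h j = 0"
    and sol: "\<And>k. k \<in> nodes t \<Longrightarrow> pair t h (act t ws (fw k)) = of_int (M (act t ws (fw k)))"
  shows "h = orthogonal_ggms t M ws"
proof
  have off: "h j = of_int (M (fw j))" if "j \<in> nodes t" "j \<notin> set ws" for j
    using sol[OF that(1)] that by (simp add: act_orthogonal_word_fw[OF ws] pair_fw)
  fix m
  show "h m = orthogonal_ggms t M ws m"
  proof (cases "m \<in> nodes t \<and> m \<in> set ws")
    case True
    then have m: "m \<in> nodes t" "m \<in> set ws" by auto
    have "(\<Sum>j\<in>nodes t - {m}. h j * cartan t j m)
        = of_int (\<Sum>j\<in>nodes t - {m}. cartan t j m * M (fw j))"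
      by (rule sum_cartan_off_orthogonal_word[OF ws m(2)]) (use off in blast)
    with sol[OF m(1)] m show ?thesis
      by (simp add: act_orthogonal_word_fw[OF ws] pair_sref_fw_off_diagonal orthogonal_ggms_def)
  next
    case False
    then show ?thesis using supp off by (auto simp: orthogonal_ggms_def)
  qed
qed

lemma ggms_orthogonal_word:
  assumes "orthogonal_word t ws"
  shows "ggms t M ws = orthogonal_ggms t M ws"
  unfolding ggms_def
proof (rule the_equality)
  show "(\<forall>j. j \<notin> nodes t \<longrightarrow> orthogonal_ggms t M ws j = 0) \<and>
      (\<forall>k\<in>nodes t. pair t (orthogonal_ggms t M ws) (act t ws (fw k)) = of_int (M (act t ws (fw k))))"
    using pair_act_orthogonal_ggms[OF assms] by (simp add: orthogonal_ggms_def)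
qed (use eq_orthogonal_ggms_if_solution[OF assms] in blast)

lemma fw_in_chamber: "m \<in> nodes t \<Longrightarrow> fw m \<in> chamber t"
  unfolding chamber_def by (rule CollectI, rule exI[of _ "[]"]) auto

lemma sref_fw_in_chamber: "m \<in> nodes t \<Longrightarrow> sref t m (fw m) \<in> chamber t"
  unfolding chamber_def by (rule CollectI, rule exI[of _ "[m]"]) auto

definition diagram_automorphism :: "ftype \<Rightarrow> bool" where
  "diagram_automorphism t \<longleftrightarrow> bij_betw (sigma t) (nodes t) (nodes t) \<and>
     (\<forall>a\<in>nodes t. \<forall>b\<in>nodes t. cartan t (sigma t a) (sigma t b) = cartan t a b)"

context
  fixes t :: ftype
  assumes aut: "diagram_automorphism t"
begin

lemma sigma_nodes: "m \<in> nodes t \<Longrightarrow> sigma t m \<in> nodes t"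
  using aut by (auto simp: diagram_automorphism_def dest: bij_betwE)

lemma sigma_eq_iff: "a \<in> nodes t \<Longrightarrow> b \<in> nodes t \<Longrightarrow> sigma t a = sigma t b \<longleftrightarrow> a = b"
  using aut by (auto simp: diagram_automorphism_def bij_betw_def dest: inj_onD)

lemma cartan_sigma: "a \<in> nodes t \<Longrightarrow> b \<in> nodes t \<Longrightarrow> cartan t (sigma t a) (sigma t b) = cartan t a b"
  using aut by (simp add: diagram_automorphism_def)

lemma funpow_sigma_nodes: "m \<in> nodes t \<Longrightarrow> (sigma t ^^ s) m \<in> nodes t"
  by (induction s) (simp_all add: sigma_nodes)

lemma sig_wt_eqI:
  assumes "\<And>k. k \<in> nodes t \<Longrightarrow> mu (sigma t k) = lam k"
    and "\<And>x. x \<notin> nodes t \<Longrightarrow> mu x = 0"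
  shows "sig_wt t lam = mu"
proof
  fix x
  show "sig_wt t lam x = mu x"
  proof (cases "x \<in> nodes t")
    case True
    with aut have "x \<in> sigma t ` nodes t"
      by (simp add: diagram_automorphism_def bij_betw_def)
    then obtain k where k: "k \<in> nodes t" "x = sigma t k"
      by blast
    then have "{j \<in> nodes t. sigma t j = x} = {k}"
      by (auto simp: sigma_eq_iff)
    with k assms(1) show ?thesis by (simp add: sig_wt_def)
  next
    case False
    then have empty: "{j \<in> nodes t. sigma t j = x} = {}"
      using sigma_nodes by auto
    show ?thesis
      unfolding sig_wt_def empty using False assms(2) by simp
  qed
qed

lemma sig_wt_fw: "m \<in> nodes t \<Longrightarrow> sig_wt t (fw m) = fw (sigma t m)"
  by (rule sig_wt_eqI) (auto simp: fw_def sigma_eq_iff dest: sigma_nodes)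

lemma sig_wt_sref_fw:
  "m \<in> nodes t \<Longrightarrow> sig_wt t (sref t m (fw m)) = sref t (sigma t m) (fw (sigma t m))"
  by (rule sig_wt_eqI)
     (auto simp: fw_def sref_def sigma_eq_iff cartan_sigma cartan_outside dest: sigma_nodes)

lemma orthogonal_ggms_sigma:
  assumes MV: "is_MV_sigma t M" and m: "m \<in> nodes t"
    and stable: "\<forall>k\<in>nodes t. sigma t k \<in> set ws \<longleftrightarrow> k \<in> set ws"
  shows "orthogonal_ggms t M ws (sigma t m) = orthogonal_ggms t M ws m"
proof -
  have inv: "M (sig_wt t \<gamma>) = M \<gamma>" if "\<gamma> \<in> chamber t" for \<gamma>
    using MV that by (simp add: is_MV_sigma_def)
  have M_fw: "M (fw (sigma t j)) = M (fw j)" if "j \<in> nodes t" for j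
    using inv[OF fw_in_chamber[OF that]] by (simp add: sig_wt_fw[OF that])
  have M_sref: "M (sref t (sigma t m) (fw (sigma t m))) = M (sref t m (fw m))"
    using inv[OF sref_fw_in_chamber[OF m]] by (simp add: sig_wt_sref_fw[OF m])
  have "bij_betw (sigma t) (nodes t - {m}) (nodes t - {sigma t m})"
    using aut m by (intro bij_betw_DiffI) (auto simp: diagram_automorphism_def sigma_nodes)
  then have "(\<Sum>j\<in>nodes t - {sigma t m}. cartan t j (sigma t m) * M (fw j))
      = (\<Sum>j\<in>nodes t - {m}. cartan t (sigma t j) (sigma t m) * M (fw (sigma t j)))"
    by (rule sum.reindex_bij_betw[symmetric])
  also have "\<dots> = (\<Sum>j\<in>nodes t - {m}. cartan t j m * M (fw j))"
    using m by (intro sum.cong) (auto simp: cartan_sigma M_fw)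
  finally show ?thesis
    using M_sref M_fw[OF m] stable m sigma_nodes[OF m] by (simp add: orthogonal_ggms_def)
qed

lemma funpow_sigma_invariant:
  assumes "\<And>k. k \<in> nodes t \<Longrightarrow> h (sigma t k) = h k" and "m \<in> nodes t"
  shows "h ((sigma t ^^ s) m) = h m"
  by (induction s) (simp_all add: assms funpow_sigma_nodes)

end

lemma Theta_single: "Theta t [j] = map (\<lambda>s. (sigma t ^^ s) j) [0..<orb t j]"
  by (simp add: Theta_def)

lemma sum_orbit_eq_sum_list_Theta:
  "(\<Sum>s<orb t j. f ((sigma t ^^ s) j)) = sum_list (map f (Theta t [j]))"
  by (simp add: Theta_single sum_list_distinct_conv_sum_set atLeast0LessThan)

lemma hpair_fw: "finite (reps t) \<Longrightarrow> i \<in> reps t \<Longrightarrow> hpair t h (fw i) = h i"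
  by (simp add: hpair_def fw_def if_distrib cong: if_cong)

lemma hpair_hsref_fw:
  assumes "finite (reps t)" "i \<in> reps t"
  shows "hpair t h (hsref t i (fw i)) = h i - (\<Sum>j\<in>reps t. h j * hcartan t j i)"
proof -
  have "hpair t h (hsref t i (fw i))
      = hpair t h (fw i) - (\<Sum>j\<in>reps t. h j * hcartan t j i)"
    unfolding hpair_def hsref_def by (simp add: fw_def algebra_simps sum_subtractf)
  with hpair_fw[OF assms] show ?thesis by simp
qed

lemma sum_hcartan_eq_sum_cartan:
  fixes h :: "nat \<Rightarrow> real"
  assumes aut: "diagram_automorphism t" and reps: "reps t \<subseteq> nodes t" and i: "i \<in> reps t"
    and orbits: "\<And>f :: nat \<Rightarrow> real.
      (\<Sum>j\<in>reps t. sum_list (map f (Theta t [j]))) = (\<Sum>m\<in>nodes t. f m)"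
    and inv: "\<And>m. m \<in> nodes t \<Longrightarrow> h (sigma t m) = h m"
  shows "(\<Sum>j\<in>reps t. h j * of_int (hcartan t j i)) = (\<Sum>m\<in>nodes t. h m * of_int (cartan t m i))"
proof -
  define g where "g m = h m * of_int (cartan t m i)" for m
  have "h j * of_int (hcartan t j i) = sum_list (map g (Theta t [j]))"
    if j: "j \<in> reps t" for j
  proof -
    have "h j * of_int (hcartan t j i) = (\<Sum>s<orb t j. g ((sigma t ^^ s) j))"
      using j i reps funpow_sigma_invariant[OF aut, of h, OF inv]
      by (auto simp: hcartan_def g_def sum_distrib_left)
    then show ?thesis by (simp only: sum_orbit_eq_sum_list_Theta)
  qed
  then have "(\<Sum>j\<in>reps t. h j * of_int (hcartan t j i)) = (\<Sum>m\<in>nodes t. g m)"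
    by (simp add: orbits)
  then show ?thesis by (simp add: g_def)
qed

text \<open>
  The orbit clause says that reps t is a transversal of the sigma-orbits and that Theta t [j]
  lists the orbit of j without repetition.
\<close>
definition folding_situation :: "ftype \<Rightarrow> bool" where
  "folding_situation t \<longleftrightarrow> diagram_automorphism t \<and> finite (reps t) \<and> reps t \<subseteq> nodes t \<and>
     (\<forall>f :: nat \<Rightarrow> real. (\<Sum>j\<in>reps t. sum_list (map f (Theta t [j]))) = (\<Sum>m\<in>nodes t. f m)) \<and>
     (\<forall>i\<in>reps t. orthogonal_word t (Theta t [i]) \<and> i \<in> set (Theta t [i]) \<and>
        (\<forall>m\<in>nodes t. sigma t m \<in> set (Theta t [i]) \<longleftrightarrow> m \<in> set (Theta t [i])))"

lemma hatBZ_Nil: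
  assumes "finite (reps t)" "reps t \<subseteq> nodes t" "i \<in> reps t"
  shows "hatBZ t M [] i = M (fw i)"
  using assms
  by (auto simp: hatBZ_def hggms_def Theta_def hact_def hpair_fw orthogonal_word_Nil
      ggms_orthogonal_word orthogonal_ggms_def)

lemma hatBZ_simple_reflection:
  assumes F: "folding_situation t" and MV: "is_MV_sigma t M" and i: "i \<in> reps t"
  shows "hatBZ t M [i] i = M (sref t i (fw i))"
proof -
  define ws where "ws = Theta t [i]"
  define h where "h = orthogonal_ggms t M ws"
  from F i have aut: "diagram_automorphism t" and fin: "finite (reps t)"
    and reps: "reps t \<subseteq> nodes t" and iN: "i \<in> nodes t"
    and ws: "orthogonal_word t ws" and i_ws: "i \<in> set ws"
    and stable: "\<forall>m\<in>nodes t. sigma t m \<in> set ws \<longleftrightarrow> m \<in> set ws"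
    by (auto simp: folding_situation_def ws_def)
  have "hatBZ t M [i] i = h i - (\<Sum>j\<in>reps t. h j * hcartan t j i)"
    by (simp add: hatBZ_def hggms_def hact_def hpair_hsref_fw[OF fin i]
        ggms_orthogonal_word[OF ws[unfolded ws_def]] h_def ws_def)
  also have "\<dots> = h i - (\<Sum>m\<in>nodes t. h m * cartan t m i)"
  proof -
    from F have "\<And>f :: nat \<Rightarrow> real.
        (\<Sum>j\<in>reps t. sum_list (map f (Theta t [j]))) = (\<Sum>m\<in>nodes t. f m)"
      by (simp add: folding_situation_def)
    moreover have "\<And>m. m \<in> nodes t \<Longrightarrow> h (sigma t m) = h m"
      unfolding h_def by (rule orthogonal_ggms_sigma[OF aut MV _ stable])
    ultimately show ?thesis
      using sum_hcartan_eq_sum_cartan[OF aut reps i] by simp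
  qed
  also have "\<dots> = pair t h (sref t i (fw i))"
    by (simp add: pair_sref_fw[OF iN])
  also have "\<dots> = M (sref t i (fw i))"
    using pair_act_orthogonal_ggms[OF ws iN, of M] i_ws
    by (simp add: act_orthogonal_word_fw[OF ws] h_def)
  finally show ?thesis .
qed

lemma cPhat_eq_cP:
  assumes "folding_situation t" "is_MV_sigma t M" "i \<in> reps t"
  shows "cPhat t M i = real_of_int (cP t M i)"
  using assms hatBZ_Nil[of t i M] hatBZ_simple_reflection[OF assms]
  by (simp add: folding_situation_def cPhat_def cP_def)

subsection \<open>The four folding situations\<close>

lemma diagram_automorphismI:
  assumes "sigma t ` nodes t \<subseteq> nodes t" "inj_on (sigma t) (nodes t)"
    and "\<And>a b. a \<in> nodes t \<Longrightarrow> b \<in> nodes t \<Longrightarrow> cartan t (sigma t a) (sigma t b) = cartan t a b"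
  shows "diagram_automorphism t"
  using assms endo_inj_surj[OF finite_nodes assms(1,2)]
  by (simp add: diagram_automorphism_def bij_betw_def)

lemma orb_eq_1: "sigma t j = j \<Longrightarrow> orb t j = 1"
  unfolding orb_def by (rule Least_equality) auto

lemma orb_eq_2:
  assumes "sigma t j \<noteq> j" "sigma t (sigma t j) = j"
  shows "orb t j = 2"
  unfolding orb_def
proof (rule Least_equality)
  show "0 < (2::nat) \<and> (sigma t ^^ 2) j = j"
    using assms by (simp add: numeral_eq_Suc)
  show "2 \<le> k" if "0 < k \<and> (sigma t ^^ k) j = j" for k
    using assms that by (cases k; cases "k - 1") auto
qed

lemma orb_eq_3:
  assumes "sigma t j \<noteq> j" "sigma t (sigma t j) \<noteq> j" "sigma t (sigma t (sigma t j)) = j"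
  shows "orb t j = 3"
  unfolding orb_def
proof (rule Least_equality)
  show "0 < (3::nat) \<and> (sigma t ^^ 3) j = j"
    using assms by (simp add: numeral_eq_Suc)
  show "3 \<le> k" if "0 < k \<and> (sigma t ^^ k) j = j" for k
    using assms that by (cases k; cases "k - 1"; cases "k - 2") auto
qed

lemma Theta_fixed: "sigma t j = j \<Longrightarrow> Theta t [j] = [j]"
  by (simp add: Theta_single orb_eq_1)

lemma Theta_involution:
  "sigma t j \<noteq> j \<Longrightarrow> sigma t (sigma t j) = j \<Longrightarrow> Theta t [j] = [j, sigma t j]"
  by (simp add: Theta_single orb_eq_2 upt_rec)

lemma Theta_order3:
  "sigma t j \<noteq> j \<Longrightarrow> sigma t (sigma t j) \<noteq> j \<Longrightarrow> sigma t (sigma t (sigma t j)) = j \<Longrightarrow>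
    Theta t [j] = [j, sigma t j, sigma t (sigma t j)]"
  by (simp add: Theta_single orb_eq_3 upt_rec)

lemma Theta_FA:
  assumes "2 \<le> l" "i \<in> {1..l}"
  shows "Theta (FA l) [i] = (if i = l then [l] else [i, 2 * l - i])"
proof (cases "i = l")
  case True
  with assms show ?thesis by (simp add: Theta_fixed)
next
  case False
  with assms have s: "sigma (FA l) i = 2 * l - i" "sigma (FA l) (2 * l - i) = i"
    and "2 * l - i \<noteq> i"
    by auto
  with False show ?thesis
    using Theta_involution[of "FA l" i] unfolding s by simp
qed

lemma diagram_automorphism_FA:
  assumes l: "2 \<le> l"
  shows "diagram_automorphism (FA l)"
proof (rule diagram_automorphismI)
  fix a b
  assume a: "a \<in> nodes (FA l)" and b: "b \<in> nodes (FA l)"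
  then have "sigma (FA l) a = 2 * l - a" "sigma (FA l) b = 2 * l - b"
    and "2 * l - a \<in> nodes (FA l)" "2 * l - b \<in> nodes (FA l)"
    and "2 * l - a = 2 * l - b \<longleftrightarrow> a = b"
    and "adj (FA l) (2 * l - a) (2 * l - b) = adj (FA l) a b"
    by (auto simp: nodes_def)
  with a b show "cartan (FA l) (sigma (FA l) a) (sigma (FA l) b) = cartan (FA l) a b"
    by (simp add: cartan_def)
qed (auto simp: nodes_def inj_on_def)

lemma sum_Theta_orbits_FA:
  fixes f :: "nat \<Rightarrow> real"
  assumes l: "2 \<le> l"
  shows "(\<Sum>j\<in>reps (FA l). sum_list (map f (Theta (FA l) [j]))) = (\<Sum>m\<in>nodes (FA l). f m)"
proof -
  have "(\<Sum>j\<in>reps (FA l). sum_list (map f (Theta (FA l) [j])))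
      = (\<Sum>j\<in>{1..<l}. f j + f (2 * l - j)) + f l"
  proof -
    have "reps (FA l) = insert l {1..<l}"
      using l by auto
    then show ?thesis
      using l by (simp add: Theta_FA add.commute)
  qed
  also have "\<dots> = (\<Sum>j\<in>{1..<l}. f j) + f l + (\<Sum>m\<in>{l + 1..2 * l - 1}. f m)"
  proof -
    have "(\<Sum>j\<in>{1..<l}. f (2 * l - j)) = (\<Sum>m\<in>{l + 1..2 * l - 1}. f m)"
      by (rule sum.reindex_bij_witness[of _ "\<lambda>m. 2 * l - m" "\<lambda>j. 2 * l - j"]) auto
    then show ?thesis by (simp add: sum.distrib)
  qed
  also have "\<dots> = (\<Sum>m\<in>{1..2 * l - 1}. f m)"
  proof -
    have "{1..2 * l - 1} = insert l {1..<l} \<union> {l + 1..2 * l - 1}"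
      using l by auto
    moreover have "sum f (insert l {1..<l} \<union> {l + 1..2 * l - 1})
        = sum f (insert l {1..<l}) + sum f {l + 1..2 * l - 1}"
      by (rule sum.union_disjoint) auto
    ultimately show ?thesis by (simp add: add.commute)
  qed
  finally show ?thesis by (simp add: nodes_def)
qed

lemma orbit_word_FA:
  assumes l: "2 \<le> l" and i: "i \<in> reps (FA l)"
  shows "orthogonal_word (FA l) (Theta (FA l) [i]) \<and> i \<in> set (Theta (FA l) [i]) \<and>
      (\<forall>m\<in>nodes (FA l). sigma (FA l) m \<in> set (Theta (FA l) [i]) \<longleftrightarrow> m \<in> set (Theta (FA l) [i]))"
proof (cases "i = l")
  case True
  with l show ?thesis
    by (auto simp: Theta_FA orthogonal_word_def nodes_def)
next
  case False
  with i have "i < l" "1 \<le> i" by auto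
  then have "\<not> adj (FA l) i (2 * l - i)" "\<not> adj (FA l) (2 * l - i) i" "i \<noteq> 2 * l - i"
    and "i \<in> nodes (FA l)" "2 * l - i \<in> nodes (FA l)"
    and "\<forall>m\<in>nodes (FA l). sigma (FA l) m \<in> {i, 2 * l - i} \<longleftrightarrow> m \<in> {i, 2 * l - i}"
    by (auto simp: nodes_def)
  with i False show ?thesis
    by (simp add: Theta_FA[OF l] orthogonal_word_def cartan_def)
qed

lemma folding_situation_FA:
  assumes "2 \<le> l"
  shows "folding_situation (FA l)"
  using assms diagram_automorphism_FA sum_Theta_orbits_FA orbit_word_FA
  by (auto simp: folding_situation_def nodes_def)

lemma Theta_FD:
  assumes "i \<in> {1..l}"
  shows "Theta (FD l) [i] = (if i = l then [l, l + 1] else [i])"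
  using assms Theta_involution[of "FD l" l] Theta_fixed[of "FD l" i] by auto

lemma diagram_automorphism_FD:
  assumes l: "3 \<le> l"
  shows "diagram_automorphism (FD l)"
proof (rule diagram_automorphismI)
  fix a b
  assume a: "a \<in> nodes (FD l)" and b: "b \<in> nodes (FD l)"
  then have "sigma (FD l) a \<in> nodes (FD l)" "sigma (FD l) b \<in> nodes (FD l)"
    and "sigma (FD l) a = sigma (FD l) b \<longleftrightarrow> a = b"
    using l by (auto simp: nodes_def)
  moreover have "adj (FD l) (sigma (FD l) a) (sigma (FD l) b) = adj (FD l) a b"
    using a b l unfolding nodes_def by (simp split: if_splits) arith
  ultimately show "cartan (FD l) (sigma (FD l) a) (sigma (FD l) b) = cartan (FD l) a b"
    using a b by (simp add: cartan_def)
qed (use l in \<open>auto simp: nodes_def inj_on_def\<close>)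

lemma sum_Theta_orbits_FD:
  fixes f :: "nat \<Rightarrow> real"
  assumes l: "3 \<le> l"
  shows "(\<Sum>j\<in>reps (FD l). sum_list (map f (Theta (FD l) [j]))) = (\<Sum>m\<in>nodes (FD l). f m)"
proof -
  have "reps (FD l) = insert l {1..<l}"
    using l by auto
  then have "(\<Sum>j\<in>reps (FD l). sum_list (map f (Theta (FD l) [j])))
      = (\<Sum>j\<in>{1..<l}. f j) + f l + f (l + 1)"
    using l by (simp add: Theta_FD add.commute add.left_commute)
  also have "\<dots> = (\<Sum>m\<in>{1..l + 1}. f m)"
    using l by (simp add: atLeastLessThanSuc_atLeastAtMost[symmetric])
  finally show ?thesis by (simp add: nodes_def)
qed

lemma orbit_word_FD:
  assumes l: "3 \<le> l" and i: "i \<in> reps (FD l)"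
  shows "orthogonal_word (FD l) (Theta (FD l) [i]) \<and> i \<in> set (Theta (FD l) [i]) \<and>
      (\<forall>m\<in>nodes (FD l). sigma (FD l) m \<in> set (Theta (FD l) [i]) \<longleftrightarrow> m \<in> set (Theta (FD l) [i]))"
  using i l by (auto simp: Theta_FD orthogonal_word_def nodes_def cartan_def)

lemma folding_situation_FD:
  assumes "3 \<le> l"
  shows "folding_situation (FD l)"
  using assms diagram_automorphism_FD sum_Theta_orbits_FD orbit_word_FD
  by (auto simp: folding_situation_def nodes_def)

lemma nodes_FD4: "nodes FD4 = {1, 2, 3, 4}"
  by (auto simp: nodes_def)

lemma folding_situation_FD4: "folding_situation FD4"
proof -
  have Theta: "Theta FD4 [1] = [1, 3, 4]" "Theta FD4 [2] = [2]"
    using Theta_order3[of FD4 1] Theta_fixed[of FD4 2] by simp_all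
  have "diagram_automorphism FD4"
    by (rule diagram_automorphismI) (auto simp: nodes_FD4 inj_on_def cartan_def)
  then show ?thesis
    by (simp add: folding_situation_def nodes_FD4 Theta[simplified] orthogonal_word_def cartan_def
        algebra_simps)
qed

lemma nodes_FE6: "nodes FE6 = {1, 2, 3, 4, 5, 6}"
  by (auto simp: nodes_def)

lemma adj_FE6:
  "adj FE6 i j \<longleftrightarrow> (i, j) \<in> {(1, 3), (3, 1), (3, 4), (4, 3), (4, 5), (5, 4), (5, 6), (6, 5), (2, 4), (4, 2)}"
  by (auto simp: doubleton_eq_iff)

lemma folding_situation_FE6: "folding_situation FE6"
proof -
  have Theta: "Theta FE6 [1] = [1, 6]" "Theta FE6 [2] = [2]" "Theta FE6 [3] = [3, 5]"
    "Theta FE6 [4] = [4]"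
    using Theta_involution[of FE6 1] Theta_involution[of FE6 3] Theta_fixed[of FE6 2]
      Theta_fixed[of FE6 4]
    by simp_all
  have "diagram_automorphism FE6"
  proof (rule diagram_automorphismI)
    fix a b
    assume "a \<in> nodes FE6" "b \<in> nodes FE6"
    then have "a \<in> {1, 2, 3, 4, 5, 6}" "b \<in> {1, 2, 3, 4, 5, 6}"
      by (simp_all add: nodes_FE6)
    then show "cartan FE6 (sigma FE6 a) (sigma FE6 b) = cartan FE6 a b"
      unfolding cartan_def adj_FE6 nodes_FE6 by (elim insertE emptyE; simp)
  qed (auto simp: nodes_FE6 inj_on_def)
  then show ?thesis
    by (simp add: folding_situation_def nodes_FE6 Theta[simplified] orthogonal_word_def cartan_def
        adj_FE6 algebra_simps del: adj.simps)
qed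

lemma folding_situation_if_valid_type: "valid_type t \<Longrightarrow> folding_situation t"
  by (cases t) (simp_all add: folding_situation_FA folding_situation_FD folding_situation_FD4
      folding_situation_FE6)

theorem lemma6p4:
  fixes t :: ftype and M :: "wt \<Rightarrow> int" and i :: nat
  assumes "valid_type t"
    and "is_MV_sigma t M"
    and "i \<in> reps t"
  shows "cPhat t M i = real_of_int (cP t M i)"
  using folding_situation_if_valid_type[OF assms(1)] assms(2,3) by (rule cPhat_eq_cP)

end
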